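(* Let $\theta>1$, $r\in(\theta^{-1},\theta^{-1/2}]$ and $\beta=\frac{1-r^2\theta}{r\theta}\max\big(\frac1{1-r},\frac1{r\theta-1}\big)$. Let $(P_1,\dots,P_n)$ be a random price sequence with values in $[1,\theta]$ and maximum $P^*$, and $Y$ a random prediction with values in $[1,\theta]$ (arbitrary joint law). Then \[ \frac{\mathbb{E}[\mathsf{A}^1_r(P,Y)]}{\mathbb{E}[P^*]}\ \ge\ \max\Big\{r,\ \frac1{r\theta}-\beta\,\frac{\mathbb{E}\big[P^*\,|P^*-Y|\big]}{\mathbb{E}[P^*]}\Big\}. \]
   Context: One-max search: fix $\theta>1$. Prices $p_1,\dots,p_n\in[1,\theta]$ are revealed one at a time; the algorithm receives at the start a prediction $y\in[1,\theta]$ of the maximum price. At each step it irrevocably accepts the current price (payoff = that price) or rejects it; if nothing is accepted the payoff is $1$. Let $\varphi_r(z)=\frac{r\theta-1}{1-r}+\frac{1-r^2\theta}{1-r}\cdot\frac{z}{r\theta}$ and $\Phi^1_r(z)=\max(r\theta,\varphi_r(z))$; $\mathsf{A}^1_r$ accepts the first price $p_i\ge\Phi^1_r(y)$, and $\mathsf{A}^1_r(P,Y)$ is its payoff on the realized prices and prediction. *)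

theory Defs
  imports "HOL-Probability.Probability"
begin

definition varphi :: "real \<Rightarrow> real \<Rightarrow> real \<Rightarrow> real" where
  "varphi \<theta> r z = (r*\<theta> - 1)/(1 - r) + (1 - r^2*\<theta>)/(1 - r) * (z/(r*\<theta>))"

definition Phi1 :: "real \<Rightarrow> real \<Rightarrow> real \<Rightarrow> real" where
  "Phi1 \<theta> r z = max (r*\<theta>) (varphi \<theta> r z)"

fun accept_first :: "real \<Rightarrow> real list \<Rightarrow> real" where
  "accept_first t [] = 1"
| "accept_first t (p # ps) = (if t \<le> p then p else accept_first t ps)"

definition A1 :: "real \<Rightarrow> real \<Rightarrow> real list \<Rightarrow> real \<Rightarrow> real" where
  "A1 \<theta> r ps y = accept_first (Phi1 \<theta> r y) ps"

end

(* The threshold is max (r theta) (varphi y), where varphi is the line through (theta, 1/r) of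
   slope k = (1 - r^2 theta)/((1 - r) r theta), and 0 <= k <= 1/(r theta) < 1.  Fix a realisation
   with maximum price p and prediction y.  If the threshold is reached, the payoff is at least
   r theta >= r p and, as varphi passes through (theta, theta/(r theta)) and is no steeper than
   1/(r theta), at least p/(r theta) - k |p - y|.  Otherwise the payoff is 1 while
   p < threshold <= 1/r; if moreover p > r theta, then p < varphi y forces y > p and
   (1 - k)(p - r theta) <= k (y - p), i.e. p/(r theta) - 1 <= beta |p - y|.  Since p >= 1,
   integrating A >= r P* and A >= P*/(r theta) - beta P* |P* - Y| and dividing by E[P*] >= 1
   gives the claim. *)

theory Submission
  imports Defs
begin

lemma accept_first_in: "accept_first t ps \<in> insert 1 (set ps)"
  by (induction ps) auto

lemma accept_first_ge_threshold: "\<exists>x\<in>set ps. t \<le> x \<Longrightarrow> t \<le> accept_first t ps"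
  by (induction ps) auto

lemma accept_first_eq_1: "\<forall>x\<in>set ps. x < t \<Longrightarrow> accept_first t ps = 1"
  by (induction ps) auto

lemma borel_measurable_accept_first:
  assumes [measurable]: "t \<in> borel_measurable M"
    and "\<forall>i\<in>set xs. (\<lambda>\<omega>. P \<omega> i) \<in> borel_measurable M"
  shows "(\<lambda>\<omega>. accept_first (t \<omega>) (map (P \<omega>) xs)) \<in> borel_measurable M"
  using assms(2)
proof (induction xs)
  case (Cons i xs)
  then have [measurable]: "(\<lambda>\<omega>. accept_first (t \<omega>) (map (P \<omega>) xs)) \<in> borel_measurable M"
    and [measurable]: "(\<lambda>\<omega>. P \<omega> i) \<in> borel_measurable M"
    by auto
  show ?case by simp measurable
qed simp

lemma borel_measurable_A1:
  assumes "Y \<in> borel_measurable M" and "\<forall>i\<in>set xs. (\<lambda>\<omega>. P \<omega> i) \<in> borel_measurable M"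
  shows "(\<lambda>\<omega>. A1 \<theta> r (map (P \<omega>) xs) (Y \<omega>)) \<in> borel_measurable M"
  unfolding A1_def
proof (rule borel_measurable_accept_first)
  show "(\<lambda>\<omega>. Phi1 \<theta> r (Y \<omega>)) \<in> borel_measurable M"
    using assms(1) unfolding Phi1_def varphi_def by measurable
qed (fact assms(2))

lemma (in prob_space) ratio_of_expectations_ge:
  fixes X A Z :: "'a \<Rightarrow> real"
  assumes X: "integrable M X" and A: "integrable M A" and Z: "integrable M Z"
    and X_pos: "0 < expectation X"
    and lin: "AE \<omega> in M. c * X \<omega> \<le> A \<omega>"
    and aff: "AE \<omega> in M. d * X \<omega> - b * Z \<omega> \<le> A \<omega>"
  shows "max c (d - b * expectation Z / expectation X) \<le> expectation A / expectation X"
proof -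
  have "expectation (\<lambda>\<omega>. c * X \<omega>) \<le> expectation A"
    by (rule integral_mono_AE) (use X A lin in auto)
  moreover have "expectation (\<lambda>\<omega>. d * X \<omega> - b * Z \<omega>) \<le> expectation A"
    by (rule integral_mono_AE) (use X A Z aff in auto)
  ultimately have "c * expectation X \<le> expectation A"
    and "d * expectation X - b * expectation Z \<le> expectation A"
    using X Z by simp_all
  moreover have "(d - b * expectation Z / expectation X) * expectation X
      = d * expectation X - b * expectation Z"
    using X_pos by (simp add: field_simps)
  ultimately show ?thesis
    using X_pos by (simp add: pos_le_divide_eq)
qed

locale one_max_parameters =
  fixes \<theta> r :: real
  assumes r_pos: "0 < r" and r_theta_gt_1: "1 < r * \<theta>" and r_sq_theta_le_1: "r^2 * \<theta> \<le> 1"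
begin

definition slope :: real where
  "slope = (1 - r^2*\<theta>) / ((1 - r) * (r*\<theta>))"

definition beta :: real where
  "beta = (1 - r^2*\<theta>)/(r*\<theta>) * max (1/(1 - r)) (1/(r*\<theta> - 1))"

lemma r_less_1: "r < 1"
proof -
  have "r * (r*\<theta>) < 1 * (r*\<theta>)"
    using r_sq_theta_le_1 r_theta_gt_1 by (simp add: power2_eq_square)
  then show ?thesis
    by (rule mult_right_less_imp_less) (use r_theta_gt_1 in simp)
qed

lemma theta_pos: "0 < \<theta>"
  using r_pos r_theta_gt_1 by (smt (verit) mult_nonneg_nonpos)

lemma slope_nonneg: "0 \<le> slope"
  using r_less_1 r_theta_gt_1 r_sq_theta_le_1 by (simp add: slope_def)

lemma slope_mult_r_theta_eq: "slope * (r*\<theta>) = (1 - r^2*\<theta>) / (1 - r)"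
  using r_pos theta_pos by (simp add: slope_def)

lemma slope_mult_r_theta_le_1: "slope * (r*\<theta>) \<le> 1"
proof -
  have "r * 1 \<le> r * (r*\<theta>)"
    using r_pos r_theta_gt_1 by simp
  then have "1 - r^2*\<theta> \<le> 1 - r"
    by (simp add: power2_eq_square algebra_simps)
  then show ?thesis
    using r_less_1 by (simp add: slope_mult_r_theta_eq)
qed

lemma slope_less_1: "slope < 1"
proof -
  have "slope * (r*\<theta>) < 1 * (r*\<theta>)"
    using slope_mult_r_theta_le_1 r_theta_gt_1 by simp
  then show ?thesis
    by (rule mult_right_less_imp_less) (use r_theta_gt_1 in simp)
qed

lemma varphi_eq: "varphi \<theta> r z = r*\<theta> + slope * (z - r*\<theta>)"
proof -
  have z_part: "(1 - r^2*\<theta>)/(1 - r) * (z/(r*\<theta>)) = slope * z"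
    by (simp add: slope_def)
  have const_part: "(r*\<theta> - 1)/(1 - r) = r*\<theta> - slope * (r*\<theta>)"
    unfolding slope_mult_r_theta_eq using r_less_1 by (simp add: field_simps power2_eq_square)
  have "varphi \<theta> r z = (r*\<theta> - 1)/(1 - r) + slope * z"
    unfolding varphi_def z_part ..
  also have "\<dots> = r*\<theta> + slope * (z - r*\<theta>)"
    unfolding const_part by (simp add: algebra_simps)
  finally show ?thesis .
qed

lemma varphi_theta: "varphi \<theta> r \<theta> = 1/r"
proof -
  have "slope * (\<theta> - r*\<theta>) = slope * (r*\<theta>) * (1 - r) / r"
    using r_pos by (simp add: field_simps)
  also have "\<dots> = (1 - r^2*\<theta>) / r"
    using r_less_1 by (simp add: slope_mult_r_theta_eq)
  finally show ?thesis
    using r_pos by (simp add: varphi_eq field_simps power2_eq_square)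
qed

lemma Phi1_ge: "r*\<theta> \<le> Phi1 \<theta> r y"
  by (simp add: Phi1_def)

lemma Phi1_le:
  assumes "y \<le> \<theta>"
  shows "Phi1 \<theta> r y \<le> 1/r"
proof -
  have "varphi \<theta> r y \<le> varphi \<theta> r \<theta>"
    using assms slope_nonneg by (simp add: varphi_eq mult_left_mono)
  moreover have "r*\<theta> \<le> 1/r"
    using r_sq_theta_le_1 r_pos by (simp add: field_simps power2_eq_square)
  ultimately show ?thesis
    by (simp add: Phi1_def varphi_theta)
qed

lemma one_minus_slope_mult_r_theta: "r*\<theta> * (1 - slope) = (r*\<theta> - 1) / (1 - r)"
proof -
  have "r*\<theta> * (1 - slope) = r*\<theta> - (1 - r^2*\<theta>) / (1 - r)"
    using slope_mult_r_theta_eq by (simp add: algebra_simps)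
  also have "\<dots> = (r*\<theta> - 1) / (1 - r)"
    using r_less_1 by (simp add: field_simps power2_eq_square)
  finally show ?thesis .
qed

text \<open>The two terms of the maximum defining \<open>beta\<close> are exactly what the acceptance case
  (\<open>slope \<le> beta\<close>) and the rejection case (the second inequality) of the threshold rule need.\<close>

lemma slope_le_beta: "slope \<le> beta" and slope_le_beta_mult: "slope \<le> beta * (r*\<theta> * (1 - slope))"
proof -
  define c where "c = (1 - r^2*\<theta>)/(r*\<theta>)"
  have "0 \<le> c"
    using r_sq_theta_le_1 r_theta_gt_1 by (simp add: c_def)
  then have beta_max: "beta = max (c / (1 - r)) (c / (r*\<theta> - 1))"
    by (simp add: beta_def c_def max_mult_distrib_left)
  have slope_eq: "slope = c / (1 - r)"
    by (simp add: slope_def c_def mult.commute)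
  also have "\<dots> = c / (r*\<theta> - 1) * (r*\<theta> * (1 - slope))"
    unfolding one_minus_slope_mult_r_theta using r_theta_gt_1 by simp
  also have "\<dots> \<le> beta * (r*\<theta> * (1 - slope))"
    unfolding beta_max using slope_less_1 r_theta_gt_1 by (intro mult_right_mono) auto
  finally show "slope \<le> beta * (r*\<theta> * (1 - slope))" .
  show "slope \<le> beta"
    unfolding beta_max slope_eq by simp
qed

lemma accept_gap:
  assumes "p \<le> \<theta>"
  shows "p/(r*\<theta>) - varphi \<theta> r z \<le> slope * (p - z)"
proof -
  have "slope * (\<theta> - p) * (r*\<theta>) \<le> \<theta> - p"
    using slope_mult_r_theta_le_1 assms slope_nonneg
    by (metis diff_ge_0_iff_ge mult.assoc mult.commute mult_left_le)
  then have "slope * (\<theta> - p) \<le> (\<theta> - p)/(r*\<theta>)"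
    using r_theta_gt_1 by (simp add: pos_le_divide_eq)
  moreover have "varphi \<theta> r z = varphi \<theta> r \<theta> - slope * (\<theta> - z)"
    by (simp only: varphi_eq) (simp add: algebra_simps)
  moreover have "1/r = \<theta>/(r*\<theta>)"
    using theta_pos by simp
  ultimately show ?thesis
    by (simp add: varphi_theta diff_divide_distrib algebra_simps)
qed

lemma reject_gap:
  assumes "p < Phi1 \<theta> r y"
  shows "p/(r*\<theta>) - 1 \<le> beta * \<bar>p - y\<bar>"
proof (cases "p \<le> r*\<theta>")
  case True
  then have "p/(r*\<theta>) \<le> 1"
    using r_theta_gt_1 by simp
  moreover have "0 \<le> beta * \<bar>p - y\<bar>"
    using slope_nonneg slope_le_beta by simp
  ultimately show ?thesis
    by linarith
next
  case False
  then have "p < varphi \<theta> r y"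
    using assms by (simp add: Phi1_def)
  then have "(1 - slope) * (p - r*\<theta>) \<le> slope * (y - p)"
    by (simp add: varphi_eq algebra_simps)
  moreover have "0 < (1 - slope) * (p - r*\<theta>)"
    using False slope_less_1 by simp
  ultimately have "p < y"
    using slope_nonneg by (smt (verit) mult_nonneg_nonpos)
  have "slope * (y - p) \<le> beta * (r*\<theta> * (1 - slope)) * (y - p)"
    using slope_le_beta_mult \<open>p < y\<close> by (intro mult_right_mono) auto
  also have "\<dots> = (1 - slope) * (beta * (r*\<theta>) * (y - p))"
    by (simp add: ac_simps)
  finally have "(1 - slope) * (p - r*\<theta>) \<le> (1 - slope) * (beta * (r*\<theta>) * (y - p))"
    using \<open>(1 - slope) * (p - r*\<theta>) \<le> slope * (y - p)\<close> by linarith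
  then have "p - r*\<theta> \<le> beta * (r*\<theta>) * (y - p)"
    using slope_less_1 by (simp add: mult_le_cancel_left_pos)
  then have "(p - r*\<theta>)/(r*\<theta>) \<le> beta * (y - p)"
    using r_theta_gt_1 by (simp add: pos_divide_le_eq ac_simps)
  moreover have "(p - r*\<theta>)/(r*\<theta>) = p/(r*\<theta>) - 1"
    using r_pos theta_pos by (simp add: diff_divide_distrib)
  ultimately show ?thesis
    using \<open>p < y\<close> by simp
qed

lemma A1_robust_bound:
  assumes "ps \<noteq> []" and "\<forall>x\<in>set ps. x \<le> \<theta>" and "y \<le> \<theta>"
  shows "r * Max (set ps) \<le> A1 \<theta> r ps y"
proof (cases "Phi1 \<theta> r y \<le> Max (set ps)")
  case True
  then have "Phi1 \<theta> r y \<le> A1 \<theta> r ps y"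
    using assms(1) by (simp add: A1_def Max_ge_iff accept_first_ge_threshold)
  moreover have "r * Max (set ps) \<le> r*\<theta>"
    using assms(1,2) r_pos by simp
  ultimately show ?thesis
    using Phi1_ge by (meson order_trans)
next
  case False
  then have "A1 \<theta> r ps y = 1"
    using assms(1) by (simp add: A1_def not_le Max_less_iff accept_first_eq_1)
  moreover have "r * Max (set ps) < r * Phi1 \<theta> r y"
    using False r_pos by simp
  moreover have "r * Phi1 \<theta> r y \<le> 1"
    using Phi1_le[OF assms(3)] r_pos by (simp add: field_simps)
  ultimately show ?thesis
    by simp
qed

lemma A1_prediction_bound:
  assumes "ps \<noteq> []" and "\<forall>x\<in>set ps. x \<le> \<theta>"
  shows "Max (set ps)/(r*\<theta>) - beta * \<bar>Max (set ps) - y\<bar> \<le> A1 \<theta> r ps y"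
proof (cases "Phi1 \<theta> r y \<le> Max (set ps)")
  case True
  then have "Phi1 \<theta> r y \<le> A1 \<theta> r ps y"
    using assms(1) by (simp add: A1_def Max_ge_iff accept_first_ge_threshold)
  moreover have "Max (set ps)/(r*\<theta>) - varphi \<theta> r y \<le> slope * (Max (set ps) - y)"
    using assms by (intro accept_gap) simp
  moreover have "slope * (Max (set ps) - y) \<le> slope * \<bar>Max (set ps) - y\<bar>"
    using slope_nonneg by (intro mult_left_mono) auto
  moreover have "\<dots> \<le> beta * \<bar>Max (set ps) - y\<bar>"
    using slope_le_beta by (intro mult_right_mono) auto
  moreover have "varphi \<theta> r y \<le> Phi1 \<theta> r y"
    by (simp add: Phi1_def)
  ultimately show ?thesis
    by linarith
next
  case False
  then show ?thesis
    using reject_gap[of "Max (set ps)" y] assms(1)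
    by (simp add: A1_def not_le Max_less_iff accept_first_eq_1)
qed

lemma A1_pointwise_bounds:
  assumes "ps \<noteq> []" and "set ps \<subseteq> {1..\<theta>}" and "y \<in> {1..\<theta>}"
  defines "p \<equiv> Max (set ps)"
  shows "p \<in> {1..\<theta>}" and "A1 \<theta> r ps y \<in> {1..\<theta>}" and "r * p \<le> A1 \<theta> r ps y"
    and "1/(r*\<theta>) * p - beta * (p * \<bar>p - y\<bar>) \<le> A1 \<theta> r ps y"
proof -
  have ps_le: "\<forall>x\<in>set ps. x \<le> \<theta>"
    using assms(2) by auto
  have "p \<in> set ps"
    unfolding p_def using assms(1) by (intro Max_in) auto
  then show p_range: "p \<in> {1..\<theta>}"
    using assms(2) by auto
  show "A1 \<theta> r ps y \<in> {1..\<theta>}"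
    using accept_first_in[of "Phi1 \<theta> r y" ps] assms(2) p_range by (auto simp: A1_def)
  show "r * p \<le> A1 \<theta> r ps y"
    using A1_robust_bound assms(1,3) ps_le by (simp add: p_def)
  have "beta * \<bar>p - y\<bar> \<le> beta * (p * \<bar>p - y\<bar>)"
    using p_range slope_nonneg slope_le_beta by (intro mult_left_mono) (auto simp: mult_le_cancel_right1)
  then show "1/(r*\<theta>) * p - beta * (p * \<bar>p - y\<bar>) \<le> A1 \<theta> r ps y"
    using A1_prediction_bound[OF assms(1) ps_le, of y] by (simp add: p_def)
qed

end

lemma one_max_parametersI:
  assumes "1 < \<theta>" and "1/\<theta> < r" and "r \<le> 1 / sqrt \<theta>"
  shows "one_max_parameters \<theta> r"
proof
  have "0 < 1/\<theta>"
    using assms(1) by simp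
  then show "0 < r"
    using assms(2) by linarith
  then have "r^2 \<le> (1 / sqrt \<theta>)^2"
    using assms(3) by (simp add: power_mono)
  also have "\<dots> = 1/\<theta>"
    using assms(1) by (simp add: power_divide)
  finally show "r^2 * \<theta> \<le> 1"
    using assms(1) by (simp add: le_divide_eq)
  show "1 < r * \<theta>"
    using assms(1,2) by (simp add: divide_less_eq)
qed

theorem corollary8:
  fixes M :: "'a measure" and P :: "'a \<Rightarrow> nat \<Rightarrow> real" and Y :: "'a \<Rightarrow> real"
    and n :: nat and \<theta> r \<beta> :: real
  assumes "prob_space M"
    and "\<theta> > 1"
    and "1 / \<theta> < r" and "r \<le> 1 / sqrt \<theta>"
    and "\<beta> = (1 - r^2*\<theta>)/(r*\<theta>) * max (1/(1 - r)) (1/(r*\<theta> - 1))"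
    and "n \<ge> 1"
    and "\<And>i. i < n \<Longrightarrow> (\<lambda>\<omega>. P \<omega> i) \<in> borel_measurable M"
    and "Y \<in> borel_measurable M"
    and "\<And>\<omega> i. \<omega> \<in> space M \<Longrightarrow> i < n \<Longrightarrow> P \<omega> i \<in> {1..\<theta>}"
    and "\<And>\<omega>. \<omega> \<in> space M \<Longrightarrow> Y \<omega> \<in> {1..\<theta>}"
  shows "(let Pstar = (\<lambda>\<omega>. Max ((P \<omega>) ` {..<n}));
              EA = (\<integral>\<omega>. A1 \<theta> r (map (P \<omega>) [0..<n]) (Y \<omega>) \<partial>M);
              EP = (\<integral>\<omega>. Pstar \<omega> \<partial>M)
          in EA / EP \<ge> max r (1/(r*\<theta>) - \<beta> * (\<integral>\<omega>. Pstar \<omega> * \<bar>Pstar \<omega> - Y \<omega>\<bar> \<partial>M) / EP))"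
proof -
  interpret prob_space M by fact
  interpret one_max_parameters \<theta> r
    using assms(2-4) by (rule one_max_parametersI)
  define Pstar where "Pstar \<omega> = Max (P \<omega> ` {..<n})" for \<omega>
  define A where "A \<omega> = A1 \<theta> r (map (P \<omega>) [0..<n]) (Y \<omega>)" for \<omega>
  define Z where "Z \<omega> = Pstar \<omega> * \<bar>Pstar \<omega> - Y \<omega>\<bar>" for \<omega>
  have "map (P \<omega>) [0..<n] \<noteq> []" and "Max (set (map (P \<omega>) [0..<n])) = Pstar \<omega>" for \<omega>
    using assms(6) by (auto simp: Pstar_def atLeast0LessThan)
  moreover have "set (map (P \<omega>) [0..<n]) \<subseteq> {1..\<theta>}" if "\<omega> \<in> space M" for \<omega>
    using assms(9)[OF that] by auto
  ultimately have bounds: "Pstar \<omega> \<in> {1..\<theta>}" "A \<omega> \<in> {1..\<theta>}" "r * Pstar \<omega> \<le> A \<omega>"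
      "1/(r*\<theta>) * Pstar \<omega> - \<beta> * Z \<omega> \<le> A \<omega>" if "\<omega> \<in> space M" for \<omega>
    using A1_pointwise_bounds[of "map (P \<omega>) [0..<n]" "Y \<omega>"] assms(5,10) that
    by (simp_all add: A_def Z_def beta_def)
  have "\<bar>Z \<omega>\<bar> \<le> \<theta> * \<theta>" if "\<omega> \<in> space M" for \<omega>
    using bounds(1)[OF that] assms(10)[OF that] by (auto simp: Z_def abs_mult intro!: mult_mono)
  moreover have [measurable]: "Pstar \<in> borel_measurable M" "A \<in> borel_measurable M" "Y \<in> borel_measurable M"
    using assms(7,8) unfolding Pstar_def A_def
    by (auto intro!: borel_measurable_Max borel_measurable_A1)
  ultimately have "integrable M Pstar" "integrable M A" "integrable M Z"
    unfolding Z_def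
    by (intro integrable_const_bound AE_I2; force dest: bounds)+
  moreover have "0 < expectation Pstar"
    using \<open>integrable M Pstar\<close>
    by (intro order.strict_trans2[OF zero_less_one] integral_ge_const AE_I2) (auto dest: bounds)
  ultimately have "max r (1/(r*\<theta>) - \<beta> * expectation Z / expectation Pstar)
      \<le> expectation A / expectation Pstar"
    using bounds by (intro ratio_of_expectations_ge AE_I2) auto
  then show ?thesis
    unfolding Let_def Pstar_def[abs_def] A_def[abs_def] Z_def[abs_def] by simp
qed

end
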